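(* Let $\Gamma=(G,\sigma)$, $G=(V,E)$, be a balanced signed graph, let $f:V\to\mathbb R$ be not identically zero, and let $\tau:V\to\{+1,-1\}$ be such that $\tau(x)\sigma_{xy}\tau(y)=+1$ for every edge $\{x,y\}\in E$. Then an induced subgraph of $G$ is a strong (respectively weak) nodal domain of $f$ on $\Gamma$ if and only if it is a strong (respectively weak) nodal domain, in the unsigned sense, of the function $\tau f$ ($(\tau f)(x)=\tau(x)f(x)$) on the graph $G$.
   Context: All graphs are finite, simple and undirected. A signed graph $\Gamma=(G,\sigma)$ is a graph $G=(V,E)$ with $\sigma:E\to\{+1,-1\}$; it is balanced if every cycle has positive sign (product of the signs of its edges). A walk is a sequence $y_1,\dots,y_m$ ($m\ge2$) with $y_j\sim y_{j+1}$. For $f:V\to\mathbb R$, $\Omega=\{x:f(x)\ne0\}$. An S-walk of $f$ is a walk with $f(y_j)\sigma_{y_jy_{j+1}}f(y_{j+1})>0$ for all $j$. A W-walk of $f$ is a walk such that for any two consecutive nonzeros $y_i,y_j$ ($i<j$, $f(y_l)=0$ for $i<l<j$) one has $f(y_i)\sigma_{y_iy_{i+1}}\cdots\sigma_{y_{j-1}y_j}f(y_j)>0$. On $\Omega$, $xR_Sy$ (resp. $xR_Wy$) iff $x=y$ or an S-walk (resp. W-walk) connects them. Strong nodal domains of $f$ on $\Gamma$: induced subgraphs on $R_S$-classes; weak nodal domains: for each $R_W$-class $W_i$, the induced subgraph on $W_i\cup\{x:\text{a W-walk joins } x \text{ to a vertex of } W_i\}$. Unsigned sense (for a graph $G$ and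 $g:V\to\mathbb R$): a positive (negative) strong nodal domain is a maximal connected induced subgraph on vertices with $g>0$ ($g<0$); a positive (negative) weak nodal domain is a maximal connected induced subgraph on vertices with $g\ge0$ ($g\le0$) containing at least one vertex where $g\ne0$. *)

theory Defs
  imports Complex_Main
begin

text \<open>Induced subgraphs are identified with
their vertex sets.\<close>

definition simple_graph :: "'a set \<Rightarrow> ('a \<Rightarrow> 'a \<Rightarrow> bool) \<Rightarrow> bool" where
  "simple_graph V E \<longleftrightarrow> finite V \<and> (\<forall>x y. E x y \<longrightarrow> x \<in> V \<and> y \<in> V)
     \<and> (\<forall>x y. E x y \<longrightarrow> E y x) \<and> (\<forall>x. \<not> E x x)"

definition signature :: "('a \<Rightarrow> 'a \<Rightarrow> bool) \<Rightarrow> ('a \<Rightarrow> 'a \<Rightarrow> real) \<Rightarrow> bool" where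
  "signature E \<sigma> \<longleftrightarrow> (\<forall>x y. E x y \<longrightarrow> \<sigma> x y = \<sigma> y x \<and> (\<sigma> x y = 1 \<or> \<sigma> x y = -1))"

definition walk :: "('a \<Rightarrow> 'a \<Rightarrow> bool) \<Rightarrow> 'a list \<Rightarrow> bool" where
  "walk E ys \<longleftrightarrow> length ys \<ge> 2 \<and> (\<forall>i. i + 1 < length ys \<longrightarrow> E (ys ! i) (ys ! (i + 1)))"

definition cycle :: "('a \<Rightarrow> 'a \<Rightarrow> bool) \<Rightarrow> 'a list \<Rightarrow> bool" where
  "cycle E cs \<longleftrightarrow> length cs \<ge> 3 \<and> distinct cs \<and> walk E cs \<and> E (last cs) (hd cs)"

definition cycle_sign :: "('a \<Rightarrow> 'a \<Rightarrow> real) \<Rightarrow> 'a list \<Rightarrow> real" where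
  "cycle_sign \<sigma> cs = (\<Prod>i<length cs - 1. \<sigma> (cs ! i) (cs ! (i + 1))) * \<sigma> (last cs) (hd cs)"

definition balanced :: "('a \<Rightarrow> 'a \<Rightarrow> bool) \<Rightarrow> ('a \<Rightarrow> 'a \<Rightarrow> real) \<Rightarrow> bool" where
  "balanced E \<sigma> \<longleftrightarrow> (\<forall>cs. cycle E cs \<longrightarrow> cycle_sign \<sigma> cs = 1)"

definition S_walk :: "('a \<Rightarrow> 'a \<Rightarrow> bool) \<Rightarrow> ('a \<Rightarrow> 'a \<Rightarrow> real) \<Rightarrow> ('a \<Rightarrow> real) \<Rightarrow> 'a list \<Rightarrow> bool" where
  "S_walk E \<sigma> f ys \<longleftrightarrow> walk E ys \<and>
     (\<forall>j. j + 1 < length ys \<longrightarrow> f (ys ! j) * \<sigma> (ys ! j) (ys ! (j + 1)) * f (ys ! (j + 1)) > 0)"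

definition W_walk :: "('a \<Rightarrow> 'a \<Rightarrow> bool) \<Rightarrow> ('a \<Rightarrow> 'a \<Rightarrow> real) \<Rightarrow> ('a \<Rightarrow> real) \<Rightarrow> 'a list \<Rightarrow> bool" where
  "W_walk E \<sigma> f ys \<longleftrightarrow> walk E ys \<and>
     (\<forall>i j. i < j \<and> j < length ys \<and> f (ys ! i) \<noteq> 0 \<and> f (ys ! j) \<noteq> 0
        \<and> (\<forall>l. i < l \<and> l < j \<longrightarrow> f (ys ! l) = 0) \<longrightarrow>
        f (ys ! i) * (\<Prod>l\<in>{i..<j}. \<sigma> (ys ! l) (ys ! (l + 1))) * f (ys ! j) > 0)"

definition nonzero_set :: "'a set \<Rightarrow> ('a \<Rightarrow> real) \<Rightarrow> 'a set" where
  "nonzero_set V f = {x \<in> V. f x \<noteq> 0}"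

definition R_S :: "'a set \<Rightarrow> ('a \<Rightarrow> 'a \<Rightarrow> bool) \<Rightarrow> ('a \<Rightarrow> 'a \<Rightarrow> real) \<Rightarrow> ('a \<Rightarrow> real) \<Rightarrow> 'a \<Rightarrow> 'a \<Rightarrow> bool" where
  "R_S V E \<sigma> f x y \<longleftrightarrow> x \<in> nonzero_set V f \<and> y \<in> nonzero_set V f \<and>
     (x = y \<or> (\<exists>ys. S_walk E \<sigma> f ys \<and> hd ys = x \<and> last ys = y))"

definition R_W :: "'a set \<Rightarrow> ('a \<Rightarrow> 'a \<Rightarrow> bool) \<Rightarrow> ('a \<Rightarrow> 'a \<Rightarrow> real) \<Rightarrow> ('a \<Rightarrow> real) \<Rightarrow> 'a \<Rightarrow> 'a \<Rightarrow> bool" where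
  "R_W V E \<sigma> f x y \<longleftrightarrow> x \<in> nonzero_set V f \<and> y \<in> nonzero_set V f \<and>
     (x = y \<or> (\<exists>ys. W_walk E \<sigma> f ys \<and> hd ys = x \<and> last ys = y))"

definition strong_nodal_domain :: "'a set \<Rightarrow> ('a \<Rightarrow> 'a \<Rightarrow> bool) \<Rightarrow> ('a \<Rightarrow> 'a \<Rightarrow> real) \<Rightarrow> ('a \<Rightarrow> real) \<Rightarrow> 'a set \<Rightarrow> bool" where
  "strong_nodal_domain V E \<sigma> f D \<longleftrightarrow>
     (\<exists>x \<in> nonzero_set V f. D = {y. R_S V E \<sigma> f x y})"

definition weak_nodal_domain :: "'a set \<Rightarrow> ('a \<Rightarrow> 'a \<Rightarrow> bool) \<Rightarrow> ('a \<Rightarrow> 'a \<Rightarrow> real) \<Rightarrow> ('a \<Rightarrow> real) \<Rightarrow> 'a set \<Rightarrow> bool" where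
  "weak_nodal_domain V E \<sigma> f D \<longleftrightarrow>
     (\<exists>x \<in> nonzero_set V f. D = {y. R_W V E \<sigma> f x y} \<union>
        {z. \<exists>ys. W_walk E \<sigma> f ys \<and> hd ys \<in> {y. R_W V E \<sigma> f x y} \<and> last ys = z})"

definition connected_set :: "('a \<Rightarrow> 'a \<Rightarrow> bool) \<Rightarrow> 'a set \<Rightarrow> bool" where
  "connected_set E S \<longleftrightarrow> S \<noteq> {} \<and>
     (\<forall>x \<in> S. \<forall>y \<in> S. x = y \<or> (\<exists>ys. walk E ys \<and> hd ys = x \<and> last ys = y \<and> set ys \<subseteq> S))"

definition max_connected_in :: "('a \<Rightarrow> 'a \<Rightarrow> bool) \<Rightarrow> 'a set \<Rightarrow> 'a set \<Rightarrow> 'a set \<Rightarrow> bool" where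
  "max_connected_in E P Q S \<longleftrightarrow> S \<subseteq> P \<and> connected_set E S \<and> S \<inter> Q \<noteq> {} \<and>
     (\<forall>T. T \<subseteq> P \<and> connected_set E T \<and> T \<inter> Q \<noteq> {} \<and> S \<subseteq> T \<longrightarrow> T = S)"

definition unsigned_strong_nodal_domain :: "'a set \<Rightarrow> ('a \<Rightarrow> 'a \<Rightarrow> bool) \<Rightarrow> ('a \<Rightarrow> real) \<Rightarrow> 'a set \<Rightarrow> bool" where
  "unsigned_strong_nodal_domain V E g D \<longleftrightarrow>
     max_connected_in E {x \<in> V. g x > 0} {x \<in> V. g x > 0} D \<or>
     max_connected_in E {x \<in> V. g x < 0} {x \<in> V. g x < 0} D"

definition unsigned_weak_nodal_domain :: "'a set \<Rightarrow> ('a \<Rightarrow> 'a \<Rightarrow> bool) \<Rightarrow> ('a \<Rightarrow> real) \<Rightarrow> 'a set \<Rightarrow> bool" where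
  "unsigned_weak_nodal_domain V E g D \<longleftrightarrow>
     max_connected_in E {x \<in> V. g x \<ge> 0} {x \<in> V. g x \<noteq> 0} D \<or>
     max_connected_in E {x \<in> V. g x \<le> 0} {x \<in> V. g x \<noteq> 0} D"

end

theory Submission
  imports Defs
begin

text \<open>Switching by \<tau> replaces \<sigma> by \<tau> x * \<sigma> x y * \<tau> y and f by \<tau> f. The sign conditions
defining S-walks and W-walks are invariant under switching, since along a walk the factors \<tau>
telescope and \<tau> x * \<tau> x = 1; by hypothesis the switched signature is the all-positive one. For the
all-positive signature an S-walk is a walk on which g = \<tau> f keeps a strict sign, and a W-walk
leaving a vertex with g \<noteq> 0 is a walk on which g does not change sign. Hence the R_S-classes
are the connected components of {g > 0} and {g < 0}, and the weak nodal domains are the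
components of {g \<ge> 0} and {g \<le> 0} through a vertex with g \<noteq> 0: these are exactly the
maximal connected sets of the unsigned definitions.\<close>

section \<open>Walks and connected components\<close>

lemma successively_iff_nth:
  "successively P xs \<longleftrightarrow> (\<forall>i. Suc i < length xs \<longrightarrow> P (xs ! i) (xs ! Suc i))"
  by (induction xs rule: induct_list012) (auto simp: nth_Cons' less_Suc_eq_0_disj)

lemma walk_iff_successively: "walk E ys \<longleftrightarrow> 2 \<le> length ys \<and> successively E ys"
  by (simp add: walk_def successively_iff_nth)

lemma walk_vertices:
  assumes "simple_graph V E" "walk E ys"
  shows "set ys \<subseteq> V"
proof -
  have "successively E ys" "2 \<le> length ys"
    using assms(2) by (auto simp: walk_iff_successively)
  then show ?thesis
  proof (induction ys rule: induct_list012)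
    case (3 x y zs)
    then show ?case
      using assms(1) by (cases zs) (auto simp: simple_graph_def)
  qed auto
qed

definition edges_within :: "('a \<Rightarrow> 'a \<Rightarrow> bool) \<Rightarrow> 'a set \<Rightarrow> ('a \<times> 'a) set" where
  "edges_within E P = {(a, b). E a b \<and> a \<in> P \<and> b \<in> P}"

definition component :: "('a \<Rightarrow> 'a \<Rightarrow> bool) \<Rightarrow> 'a set \<Rightarrow> 'a \<Rightarrow> 'a set" where
  "component E P x = (edges_within E P)\<^sup>* `` {x}"

lemma successively_rtrancl_edges_within:
  "successively E ys \<Longrightarrow> set ys \<subseteq> P \<Longrightarrow> ys \<noteq> [] \<Longrightarrow> (hd ys, last ys) \<in> (edges_within E P)\<^sup>*"
proof (induction ys rule: induct_list012)
  case (3 x y zs)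
  then have "(x, y) \<in> edges_within E P" "(y, last (y # zs)) \<in> (edges_within E P)\<^sup>*"
    by (auto simp: edges_within_def)
  then show ?case
    by (simp add: converse_rtrancl_into_rtrancl)
qed auto

lemma rtrancl_edges_within_iff_walk:
  assumes "a \<in> P"
  shows "(a, b) \<in> (edges_within E P)\<^sup>* \<longleftrightarrow>
    a = b \<or> (\<exists>ys. walk E ys \<and> hd ys = a \<and> last ys = b \<and> set ys \<subseteq> P)"
proof
  show "(a, b) \<in> (edges_within E P)\<^sup>* \<Longrightarrow>
      a = b \<or> (\<exists>ys. walk E ys \<and> hd ys = a \<and> last ys = b \<and> set ys \<subseteq> P)"
  proof (induction rule: converse_rtrancl_induct)
    case (step a c)
    then have ac: "E a c" "a \<in> P" "c \<in> P"
      by (auto simp: edges_within_def)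
    from step.IH show ?case
    proof
      assume "c = b"
      then have "walk E [a, b] \<and> hd [a, b] = a \<and> last [a, b] = b \<and> set [a, b] \<subseteq> P"
        using ac by (simp add: walk_iff_successively)
      then show ?thesis by blast
    next
      assume "\<exists>ys. walk E ys \<and> hd ys = c \<and> last ys = b \<and> set ys \<subseteq> P"
      then obtain ys where ys: "walk E ys" "hd ys = c" "last ys = b" "set ys \<subseteq> P"
        by blast
      then have "ys \<noteq> []"
        by (auto simp: walk_def)
      then have "walk E (a # ys) \<and> hd (a # ys) = a \<and> last (a # ys) = b \<and> set (a # ys) \<subseteq> P"
        using ys ac by (auto simp: walk_iff_successively successively_Cons)
      then show ?thesis by blast
    qed
  qed simp
next
  show "a = b \<or> (\<exists>ys. walk E ys \<and> hd ys = a \<and> last ys = b \<and> set ys \<subseteq> P) \<Longrightarrow>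
      (a, b) \<in> (edges_within E P)\<^sup>*"
    by (auto simp: walk_iff_successively dest!: successively_rtrancl_edges_within[where P = P])
qed

lemma component_subset:
  assumes "x \<in> P"
  shows "component E P x \<subseteq> P"
proof
  fix y
  assume "y \<in> component E P x"
  then have "(x, y) \<in> (edges_within E P)\<^sup>*"
    by (simp add: component_def)
  then show "y \<in> P"
    using assms by (induction rule: rtrancl_induct) (auto simp: edges_within_def)
qed

lemma self_in_component [simp]: "x \<in> component E P x"
  by (simp add: component_def)

lemma rtrancl_within_component:
  assumes "(a, b) \<in> (edges_within E P)\<^sup>*" "a \<in> component E P x"
  shows "(a, b) \<in> (edges_within E (component E P x))\<^sup>*"
  using assms(1)
proof (induction rule: rtrancl_induct)
  case (step y z)
  have "(x, a) \<in> (edges_within E P)\<^sup>*"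
    using assms(2) by (simp add: component_def)
  then have "(x, y) \<in> (edges_within E P)\<^sup>*" "(x, z) \<in> (edges_within E P)\<^sup>*"
    using step.hyps by (auto intro: rtrancl_trans)
  then have "y \<in> component E P x" "z \<in> component E P x"
    by (simp_all add: component_def)
  with step show ?case
    by (auto simp: edges_within_def intro: rtrancl_into_rtrancl)
qed simp

lemma connected_set_component:
  assumes "\<forall>x y. E x y \<longrightarrow> E y x"
  shows "connected_set E (component E P x)"
  unfolding connected_set_def
proof (intro conjI ballI)
  fix a b
  assume a: "a \<in> component E P x" and b: "b \<in> component E P x"
  have "sym (edges_within E P)"
    using assms by (auto simp: sym_def edges_within_def)
  then have "sym ((edges_within E P)\<^sup>*)"
    by (rule sym_rtrancl)
  moreover have "(x, a) \<in> (edges_within E P)\<^sup>*" "(x, b) \<in> (edges_within E P)\<^sup>*"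
    using a b by (simp_all add: component_def)
  ultimately have "(a, b) \<in> (edges_within E P)\<^sup>*"
    by (meson rtrancl_trans symD)
  then have "(a, b) \<in> (edges_within E (component E P x))\<^sup>*"
    using a by (rule rtrancl_within_component)
  then show "a = b \<or> (\<exists>ys. walk E ys \<and> hd ys = a \<and> last ys = b \<and> set ys \<subseteq> component E P x)"
    using a by (simp add: rtrancl_edges_within_iff_walk)
qed (metis empty_iff self_in_component)

lemma connected_subset_component:
  assumes "connected_set E T" "T \<subseteq> P" "x \<in> T"
  shows "T \<subseteq> component E P x"
proof
  fix y
  assume "y \<in> T"
  then have "(x, y) \<in> (edges_within E T)\<^sup>*"
    using assms(1,3) by (simp add: connected_set_def rtrancl_edges_within_iff_walk)
  moreover have "edges_within E T \<subseteq> edges_within E P"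
    using assms(2) by (auto simp: edges_within_def)
  ultimately show "y \<in> component E P x"
    by (auto simp: component_def dest: rtrancl_mono)
qed

lemma max_connected_in_iff_component:
  assumes "\<forall>x y. E x y \<longrightarrow> E y x"
  shows "max_connected_in E P Q S \<longleftrightarrow> (\<exists>x \<in> P \<inter> Q. S = component E P x)"
proof
  assume S: "max_connected_in E P Q S"
  then have S_props: "S \<subseteq> P" "connected_set E S" "S \<inter> Q \<noteq> {}"
    by (simp_all add: max_connected_in_def)
  then obtain x where x: "x \<in> S" "x \<in> Q"
    by blast
  then have "x \<in> P"
    using S_props by blast
  from S have maximal: "T = S" if "T \<subseteq> P" "connected_set E T" "T \<inter> Q \<noteq> {}" "S \<subseteq> T" for T
    using that unfolding max_connected_in_def by blast
  have "component E P x = S"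
  proof (rule maximal)
    show "component E P x \<subseteq> P"
      using \<open>x \<in> P\<close> by (rule component_subset)
    show "connected_set E (component E P x)"
      using assms by (rule connected_set_component)
    show "component E P x \<inter> Q \<noteq> {}"
      using x(2) self_in_component[of x E P] by blast
    show "S \<subseteq> component E P x"
      using S_props(2,1) x(1) by (rule connected_subset_component)
  qed
  then show "\<exists>x \<in> P \<inter> Q. S = component E P x"
    using \<open>x \<in> P\<close> x(2) by blast
next
  assume "\<exists>x \<in> P \<inter> Q. S = component E P x"
  then obtain x where x: "x \<in> P" "x \<in> Q" and S: "S = component E P x"
    by blast
  show "max_connected_in E P Q S"
    unfolding max_connected_in_def
  proof (intro conjI allI impI)
    show "S \<subseteq> P"
      unfolding S using x(1) by (rule component_subset)
    show "connected_set E S"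
      using S connected_set_component[OF assms] by simp
    show "S \<inter> Q \<noteq> {}"
      using x(2) self_in_component[of x E P] unfolding S by blast
    fix T
    assume T: "T \<subseteq> P \<and> connected_set E T \<and> T \<inter> Q \<noteq> {} \<and> S \<subseteq> T"
    then have "T \<subseteq> component E P x"
      using S self_in_component[of x E P] by (intro connected_subset_component) blast+
    with S T show "T = S"
      by blast
  qed
qed

section \<open>Switching\<close>

lemma prod_switch_telescope:
  fixes t s :: "nat \<Rightarrow> 'b::comm_monoid_mult"
  assumes "i < j" and "\<forall>l. i < l \<and> l < j \<longrightarrow> t l * t l = 1"
  shows "(\<Prod>l\<in>{i..<j}. t l * s l * t (Suc l)) = t i * (\<Prod>l\<in>{i..<j}. s l) * t j"
proof -
  have "Suc i \<le> j"
    using assms(1) by simp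
  then show ?thesis
  proof (induction j rule: dec_induct)
    case (step n)
    have "(\<Prod>l\<in>{i..<Suc n}. t l * s l * t (Suc l))
        = t i * (\<Prod>l\<in>{i..<n}. s l) * (t n * t n) * s n * t (Suc n)"
      using step.hyps step.IH by (simp add: prod.atLeastLessThan_Suc ac_simps)
    also have "\<dots> = t i * (\<Prod>l\<in>{i..<Suc n}. s l) * t (Suc n)"
      using step.hyps assms(2) by (simp add: prod.atLeastLessThan_Suc ac_simps)
    finally show ?case .
  qed simp
qed

context
  fixes V :: "'a set" and E :: "'a \<Rightarrow> 'a \<Rightarrow> bool" and \<sigma> \<sigma>' :: "'a \<Rightarrow> 'a \<Rightarrow> real"
    and \<tau> :: "'a \<Rightarrow> real"
  assumes graph: "simple_graph V E"
    and switching: "\<forall>x \<in> V. \<tau> x = 1 \<or> \<tau> x = -1"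
    and switched: "\<forall>x y. E x y \<longrightarrow> \<sigma>' x y = \<tau> x * \<sigma> x y * \<tau> y"
begin

lemma switching_square: "x \<in> V \<Longrightarrow> \<tau> x * \<tau> x = 1"
  using switching by auto

lemma S_walk_switch: "S_walk E \<sigma>' (\<lambda>x. \<tau> x * f x) = S_walk E \<sigma> f"
proof
  fix ys
  have "(\<tau> a * f a) * \<sigma>' a b * (\<tau> b * f b) = f a * \<sigma> a b * f b" if "E a b" for a b
  proof -
    have "\<tau> a * \<tau> a = 1" "\<tau> b * \<tau> b = 1"
      using that graph switching_square by (auto simp: simple_graph_def)
    then show ?thesis
      using that switched by (simp add: algebra_simps)
  qed
  then have "(j + 1 < length ys \<longrightarrow>
        0 < (\<tau> (ys ! j) * f (ys ! j)) * \<sigma>' (ys ! j) (ys ! (j + 1))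
          * (\<tau> (ys ! (j + 1)) * f (ys ! (j + 1))))
      \<longleftrightarrow> (j + 1 < length ys \<longrightarrow>
        0 < f (ys ! j) * \<sigma> (ys ! j) (ys ! (j + 1)) * f (ys ! (j + 1)))"
    if "walk E ys" for j
    using that unfolding walk_def by metis
  then show "S_walk E \<sigma>' (\<lambda>x. \<tau> x * f x) ys = S_walk E \<sigma> f ys"
    unfolding S_walk_def by blast
qed

lemma switch_gap_product:
  assumes walk: "walk E ys" and ij: "i < j" "j < length ys"
  shows "(\<tau> (ys ! i) * f (ys ! i)) * (\<Prod>l\<in>{i..<j}. \<sigma>' (ys ! l) (ys ! (l + 1)))
      * (\<tau> (ys ! j) * f (ys ! j))
    = f (ys ! i) * (\<Prod>l\<in>{i..<j}. \<sigma> (ys ! l) (ys ! (l + 1))) * f (ys ! j)"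
proof -
  have V: "ys ! l \<in> V" if "l < length ys" for l
    using walk_vertices[OF graph walk] that by auto
  have "(\<Prod>l\<in>{i..<j}. \<sigma>' (ys ! l) (ys ! Suc l))
      = (\<Prod>l\<in>{i..<j}. \<tau> (ys ! l) * \<sigma> (ys ! l) (ys ! Suc l) * \<tau> (ys ! Suc l))"
    using ij walk switched by (intro prod.cong) (auto simp: walk_def)
  also have "\<dots> = \<tau> (ys ! i) * (\<Prod>l\<in>{i..<j}. \<sigma> (ys ! l) (ys ! Suc l)) * \<tau> (ys ! j)"
    using ij V switching_square by (intro prod_switch_telescope) auto
  finally show ?thesis
    using ij V switching_square[of "ys ! i"] switching_square[of "ys ! j"]
    by (simp add: algebra_simps)
qed

lemma W_walk_switch: "W_walk E \<sigma>' (\<lambda>x. \<tau> x * f x) = W_walk E \<sigma> f"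
proof
  fix ys
  show "W_walk E \<sigma>' (\<lambda>x. \<tau> x * f x) ys = W_walk E \<sigma> f ys"
  proof (cases "walk E ys")
    case True
    have nonzero: "\<tau> (ys ! l) * f (ys ! l) \<noteq> 0 \<longleftrightarrow> f (ys ! l) \<noteq> 0" if "l < length ys" for l
    proof -
      have "ys ! l \<in> V"
        using walk_vertices[OF graph True] that by auto
      then show ?thesis
        using switching by auto
    qed
    have "(i < j \<and> j < length ys \<and> \<tau> (ys ! i) * f (ys ! i) \<noteq> 0 \<and> \<tau> (ys ! j) * f (ys ! j) \<noteq> 0
          \<and> (\<forall>l. i < l \<and> l < j \<longrightarrow> \<tau> (ys ! l) * f (ys ! l) = 0) \<longrightarrow>
          0 < (\<tau> (ys ! i) * f (ys ! i)) * (\<Prod>l\<in>{i..<j}. \<sigma>' (ys ! l) (ys ! (l + 1)))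
            * (\<tau> (ys ! j) * f (ys ! j)))
      \<longleftrightarrow> (i < j \<and> j < length ys \<and> f (ys ! i) \<noteq> 0 \<and> f (ys ! j) \<noteq> 0
          \<and> (\<forall>l. i < l \<and> l < j \<longrightarrow> f (ys ! l) = 0) \<longrightarrow>
          0 < f (ys ! i) * (\<Prod>l\<in>{i..<j}. \<sigma> (ys ! l) (ys ! (l + 1))) * f (ys ! j))" for i j
    proof (cases "i < j \<and> j < length ys")
      case True
      then have ij: "i < j" "j < length ys" and i: "i < length ys"
        by auto
      have "(\<forall>l. i < l \<and> l < j \<longrightarrow> \<tau> (ys ! l) * f (ys ! l) = 0)
          \<longleftrightarrow> (\<forall>l. i < l \<and> l < j \<longrightarrow> f (ys ! l) = 0)"
        using ij nonzero by (meson order.strict_trans)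
      then show ?thesis
        by (simp only: nonzero[OF i] nonzero[OF ij(2)] switch_gap_product[OF \<open>walk E ys\<close> ij])
    qed blast
    then show ?thesis
      unfolding W_walk_def using True by blast
  qed (simp add: W_walk_def)
qed

lemma nonzero_set_switch: "nonzero_set V (\<lambda>x. \<tau> x * f x) = nonzero_set V f"
  using switching by (auto simp: nonzero_set_def)

lemma strong_nodal_domain_switch:
  "strong_nodal_domain V E \<sigma>' (\<lambda>x. \<tau> x * f x) = strong_nodal_domain V E \<sigma> f"
  by (intro ext) (simp add: strong_nodal_domain_def R_S_def S_walk_switch nonzero_set_switch)

lemma weak_nodal_domain_switch:
  "weak_nodal_domain V E \<sigma>' (\<lambda>x. \<tau> x * f x) = weak_nodal_domain V E \<sigma> f"
  by (intro ext) (simp add: weak_nodal_domain_def R_W_def W_walk_switch nonzero_set_switch)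

end

section \<open>The all-positive signature\<close>

lemma nonzero_terms_product_pos:
  fixes g :: "nat \<Rightarrow> real"
  assumes adjacent: "\<forall>i j. i < j \<and> j < n \<and> g i \<noteq> 0 \<and> g j \<noteq> 0 \<and> (\<forall>l. i < l \<and> l < j \<longrightarrow> g l = 0)
      \<longrightarrow> 0 < g i * g j"
  shows "i < j \<Longrightarrow> j < n \<Longrightarrow> g i \<noteq> 0 \<Longrightarrow> g j \<noteq> 0 \<Longrightarrow> 0 < g i * g j"
proof (induction "j - i" arbitrary: i j rule: less_induct)
  case less
  show ?case
  proof (cases "\<exists>l. i < l \<and> l < j \<and> g l \<noteq> 0")
    case True
    then obtain l where l: "i < l" "l < j" "g l \<noteq> 0"
      by blast
    have "0 < g i * g l" "0 < g l * g j"
      by (rule less.hyps; use l less.prems in simp)+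
    then show ?thesis
      by (auto simp: zero_less_mult_iff)
  qed (use less adjacent in blast)
qed

lemma S_walk_positive_iff:
  "S_walk E (\<lambda>_ _. 1) g ys \<longleftrightarrow> walk E ys \<and> (\<forall>v \<in> set ys. 0 < g v * g (hd ys))"
proof
  assume "S_walk E (\<lambda>_ _. 1) g ys"
  then have walk: "walk E ys" and step: "\<And>j. Suc j < length ys \<Longrightarrow> 0 < g (ys ! j) * g (ys ! Suc j)"
    by (auto simp: S_walk_def)
  have "0 < g (ys ! k) * g (ys ! 0)" if "k < length ys" for k
    using that
  proof (induction k)
    case 0
    have "0 < g (ys ! 0) * g (ys ! 1)"
      using step[of 0] walk by (simp add: walk_def)
    then show ?case
      by (auto simp: zero_less_mult_iff)
  next
    case (Suc k)
    then show ?case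
      using step[of k] by (auto simp: zero_less_mult_iff)
  qed
  moreover have "ys \<noteq> []"
    using walk by (auto simp: walk_def)
  ultimately show "walk E ys \<and> (\<forall>v \<in> set ys. 0 < g v * g (hd ys))"
    using walk by (auto simp: in_set_conv_nth hd_conv_nth)
next
  assume walk_signs: "walk E ys \<and> (\<forall>v \<in> set ys. 0 < g v * g (hd ys))"
  have "0 < g (ys ! j) * g (ys ! Suc j)" if "Suc j < length ys" for j
  proof -
    have "0 < g (ys ! j) * g (hd ys)" "0 < g (ys ! Suc j) * g (hd ys)"
      using that walk_signs by simp_all
    then show ?thesis
      by (auto simp: zero_less_mult_iff)
  qed
  then show "S_walk E (\<lambda>_ _. 1) g ys"
    using walk_signs by (simp add: S_walk_def)
qed

lemma W_walk_positive_iff: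
  assumes "g (hd ys) \<noteq> 0"
  shows "W_walk E (\<lambda>_ _. 1) g ys \<longleftrightarrow> walk E ys \<and> (\<forall>v \<in> set ys. 0 \<le> g v * g (hd ys))"
proof
  assume "W_walk E (\<lambda>_ _. 1) g ys"
  then have walk: "walk E ys" and adjacent: "\<forall>i j. i < j \<and> j < length ys \<and> g (ys ! i) \<noteq> 0
      \<and> g (ys ! j) \<noteq> 0 \<and> (\<forall>l. i < l \<and> l < j \<longrightarrow> g (ys ! l) = 0) \<longrightarrow> 0 < g (ys ! i) * g (ys ! j)"
    by (simp_all add: W_walk_def)
  have "ys \<noteq> []"
    using walk by (auto simp: walk_def)
  then have ys: "ys \<noteq> []" "hd ys = ys ! 0"
    by (simp_all add: hd_conv_nth)
  have "0 \<le> g (ys ! k) * g (ys ! 0)" if "k < length ys" for k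
  proof (cases "k = 0 \<or> g (ys ! k) = 0")
    case False
    then have "0 < g (ys ! 0) * g (ys ! k)"
      using nonzero_terms_product_pos[OF adjacent, of 0 k] that assms ys by simp
    then show ?thesis
      by (simp add: mult.commute)
  qed auto
  then show "walk E ys \<and> (\<forall>v \<in> set ys. 0 \<le> g v * g (hd ys))"
    using walk ys by (auto simp: in_set_conv_nth)
next
  assume walk_signs: "walk E ys \<and> (\<forall>v \<in> set ys. 0 \<le> g v * g (hd ys))"
  have "0 < g (ys ! i) * g (ys ! j)"
    if "i < j" "j < length ys" "g (ys ! i) \<noteq> 0" "g (ys ! j) \<noteq> 0" for i j
  proof -
    have "0 \<le> g (ys ! i) * g (hd ys)" "0 \<le> g (ys ! j) * g (hd ys)"
      using that walk_signs by simp_all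
    then show ?thesis
      using that(3,4) assms by (auto simp: zero_le_mult_iff zero_less_mult_iff)
  qed
  then show "W_walk E (\<lambda>_ _. 1) g ys"
    using walk_signs by (simp add: W_walk_def)
qed

lemma R_S_class_positive_eq_component:
  assumes graph: "simple_graph V E" and x: "x \<in> nonzero_set V g"
  shows "{y. R_S V E (\<lambda>_ _. 1) g x y} = component E {v \<in> V. 0 < g v * g x} x"
    (is "_ = component E ?P x")
proof -
  have "x \<in> ?P"
    using x by (auto simp: nonzero_set_def zero_less_mult_iff linorder_neq_iff)
  have P_nonzero: "?P \<subseteq> nonzero_set V g"
    by (auto simp: nonzero_set_def)
  have S_walk_from_x: "S_walk E (\<lambda>_ _. 1) g ys \<and> hd ys = x \<longleftrightarrow>
      walk E ys \<and> hd ys = x \<and> set ys \<subseteq> ?P" for ys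
    using walk_vertices[OF graph] by (auto simp: S_walk_positive_iff)
  have "R_S V E (\<lambda>_ _. 1) g x y \<longleftrightarrow> y \<in> nonzero_set V g \<and> (x, y) \<in> (edges_within E ?P)\<^sup>*" for y
    unfolding R_S_def rtrancl_edges_within_iff_walk[OF \<open>x \<in> ?P\<close>] using x S_walk_from_x by blast
  moreover have "component E ?P x \<subseteq> nonzero_set V g"
    using component_subset[OF \<open>x \<in> ?P\<close>] P_nonzero by blast
  ultimately show ?thesis
    by (auto simp: component_def)
qed

lemma weak_domain_positive_eq_component:
  assumes graph: "simple_graph V E" and x: "x \<in> nonzero_set V g"
  shows "{y. R_W V E (\<lambda>_ _. 1) g x y}
      \<union> {z. \<exists>ys. W_walk E (\<lambda>_ _. 1) g ys \<and> hd ys \<in> {y. R_W V E (\<lambda>_ _. 1) g x y} \<and> last ys = z}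
      = component E {v \<in> V. 0 \<le> g v * g x} x"
    (is "?W \<union> ?Z = component E ?Q x")
proof -
  have "x \<in> ?Q"
    using x by (simp add: nonzero_set_def)
  have x_in_W: "x \<in> ?W"
    using x by (simp add: R_W_def)
  have W_walk_from: "W_walk E (\<lambda>_ _. 1) g ys \<and> hd ys = w \<longleftrightarrow>
      walk E ys \<and> hd ys = w \<and> set ys \<subseteq> {v \<in> V. 0 \<le> g v * g w}" if "g w \<noteq> 0" for ys w
    using walk_vertices[OF graph] W_walk_positive_iff[of g ys E] that by auto
  have same_Q: "{v \<in> V. 0 \<le> g v * g w} = ?Q" if "w \<in> ?Q" "g w \<noteq> 0" for w
    using that x by (auto simp: nonzero_set_def zero_le_mult_iff)
  have W_walk_stays: "last ys \<in> component E ?Q x"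
    if "W_walk E (\<lambda>_ _. 1) g ys" "hd ys \<in> component E ?Q x" "g (hd ys) \<noteq> 0" for ys
  proof -
    have "hd ys \<in> ?Q"
      using that(2) component_subset[OF \<open>x \<in> ?Q\<close>] by blast
    have "walk E ys" "set ys \<subseteq> {v \<in> V. 0 \<le> g v * g (hd ys)}"
      using W_walk_from[OF that(3), of ys] that(1) by simp_all
    then have "(hd ys, last ys) \<in> (edges_within E ?Q)\<^sup>*"
      unfolding same_Q[OF \<open>hd ys \<in> ?Q\<close> that(3)]
      using rtrancl_edges_within_iff_walk[OF \<open>hd ys \<in> ?Q\<close>] by blast
    moreover have "(x, hd ys) \<in> (edges_within E ?Q)\<^sup>*"
      using that(2) by (simp add: component_def)
    ultimately have "(x, last ys) \<in> (edges_within E ?Q)\<^sup>*"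
      by (rule rtrancl_trans[rotated])
    then show ?thesis
      by (simp add: component_def)
  qed
  have x_nonzero: "g x \<noteq> 0"
    using x by (simp add: nonzero_set_def)
  have W_sub: "?W \<subseteq> component E ?Q x"
  proof
    fix y
    assume "y \<in> ?W"
    then have "x = y \<or> (\<exists>ys. W_walk E (\<lambda>_ _. 1) g ys \<and> hd ys = x \<and> last ys = y)"
      by (simp add: R_W_def)
    then show "y \<in> component E ?Q x"
      using W_walk_stays x_nonzero by fastforce
  qed
  moreover have "?Z \<subseteq> component E ?Q x"
  proof
    fix z
    assume "z \<in> ?Z"
    then obtain ys where ys: "W_walk E (\<lambda>_ _. 1) g ys" "hd ys \<in> ?W" "last ys = z"
      by blast
    then have "g (hd ys) \<noteq> 0"
      by (simp add: R_W_def nonzero_set_def)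
    then show "z \<in> component E ?Q x"
      using W_walk_stays[OF ys(1)] ys(2,3) W_sub by blast
  qed
  moreover have "component E ?Q x \<subseteq> ?W \<union> ?Z"
  proof
    fix z
    assume "z \<in> component E ?Q x"
    then have "x = z \<or> (\<exists>ys. walk E ys \<and> hd ys = x \<and> last ys = z \<and> set ys \<subseteq> ?Q)"
      using rtrancl_edges_within_iff_walk[OF \<open>x \<in> ?Q\<close>] by (simp add: component_def)
    then show "z \<in> ?W \<union> ?Z"
      using W_walk_from[OF x_nonzero] x_in_W by blast
  qed
  ultimately show ?thesis
    by blast
qed

lemma strong_nodal_domain_positive_iff:
  assumes graph: "simple_graph V E"
  shows "strong_nodal_domain V E (\<lambda>_ _. 1) g D \<longleftrightarrow> unsigned_strong_nodal_domain V E g D"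
proof -
  have sym: "\<forall>x y. E x y \<longrightarrow> E y x"
    using graph by (simp add: simple_graph_def)
  have same_sign:
    "{v \<in> V. 0 < g v * g x} = (if 0 < g x then {v \<in> V. 0 < g v} else {v \<in> V. g v < 0})"
    if "g x \<noteq> 0" for x
    using that by (auto simp: zero_less_mult_iff)
  have "strong_nodal_domain V E (\<lambda>_ _. 1) g D \<longleftrightarrow>
      (\<exists>x \<in> nonzero_set V g. D = component E {v \<in> V. 0 < g v * g x} x)"
    using R_S_class_positive_eq_component[OF graph] by (auto simp: strong_nodal_domain_def)
  also have "\<dots> \<longleftrightarrow> (\<exists>x \<in> {v \<in> V. 0 < g v}. D = component E {v \<in> V. 0 < g v} x)
      \<or> (\<exists>x \<in> {v \<in> V. g v < 0}. D = component E {v \<in> V. g v < 0} x)"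
    using same_sign by (auto simp: nonzero_set_def linorder_neq_iff)
  also have "\<dots> \<longleftrightarrow> unsigned_strong_nodal_domain V E g D"
    by (simp add: unsigned_strong_nodal_domain_def max_connected_in_iff_component[OF sym])
  finally show ?thesis .
qed

lemma weak_nodal_domain_positive_iff:
  assumes graph: "simple_graph V E"
  shows "weak_nodal_domain V E (\<lambda>_ _. 1) g D \<longleftrightarrow> unsigned_weak_nodal_domain V E g D"
proof -
  have sym: "\<forall>x y. E x y \<longrightarrow> E y x"
    using graph by (simp add: simple_graph_def)
  have same_sign:
    "{v \<in> V. 0 \<le> g v * g x} = (if 0 < g x then {v \<in> V. 0 \<le> g v} else {v \<in> V. g v \<le> 0})"
    if "g x \<noteq> 0" for x
    using that by (auto simp: zero_le_mult_iff)
  have "weak_nodal_domain V E (\<lambda>_ _. 1) g D \<longleftrightarrow>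
      (\<exists>x \<in> nonzero_set V g. D = component E {v \<in> V. 0 \<le> g v * g x} x)"
    using weak_domain_positive_eq_component[OF graph] by (auto simp: weak_nodal_domain_def)
  also have "\<dots> \<longleftrightarrow> (\<exists>x \<in> {v \<in> V. 0 \<le> g v} \<inter> {v \<in> V. g v \<noteq> 0}. D = component E {v \<in> V. 0 \<le> g v} x)
      \<or> (\<exists>x \<in> {v \<in> V. g v \<le> 0} \<inter> {v \<in> V. g v \<noteq> 0}. D = component E {v \<in> V. g v \<le> 0} x)"
    using same_sign by (auto simp: nonzero_set_def linorder_neq_iff)
  also have "\<dots> \<longleftrightarrow> unsigned_weak_nodal_domain V E g D"
    by (simp add: unsigned_weak_nodal_domain_def max_connected_in_iff_component[OF sym])
  finally show ?thesis .
qed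

theorem corollary3p3:
  fixes V :: "'a set" and E :: "'a \<Rightarrow> 'a \<Rightarrow> bool" and \<sigma> :: "'a \<Rightarrow> 'a \<Rightarrow> real"
    and f :: "'a \<Rightarrow> real" and \<tau> :: "'a \<Rightarrow> real" and D :: "'a set"
  assumes "simple_graph V E"
    and "signature E \<sigma>"
    and "balanced E \<sigma>"
    and "\<exists>x \<in> V. f x \<noteq> 0"
    and "\<forall>x \<in> V. \<tau> x = 1 \<or> \<tau> x = -1"
    and "\<forall>x y. E x y \<longrightarrow> \<tau> x * \<sigma> x y * \<tau> y = 1"
  shows "(strong_nodal_domain V E \<sigma> f D \<longleftrightarrow>
            unsigned_strong_nodal_domain V E (\<lambda>x. \<tau> x * f x) D)
       \<and> (weak_nodal_domain V E \<sigma> f D \<longleftrightarrow>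
            unsigned_weak_nodal_domain V E (\<lambda>x. \<tau> x * f x) D)"
proof -
  \<comment> \<open>Balance only guarantees that such a \<tau> exists.\<close>
  have switched: "\<forall>x y. E x y \<longrightarrow> (\<lambda>_ _. 1) x y = \<tau> x * \<sigma> x y * \<tau> y"
    using assms(6) by simp
  show ?thesis
    unfolding strong_nodal_domain_switch[OF assms(1,5) switched, of f, symmetric]
      weak_nodal_domain_switch[OF assms(1,5) switched, of f, symmetric]
    using strong_nodal_domain_positive_iff[OF assms(1)] weak_nodal_domain_positive_iff[OF assms(1)]
    by blast
qed

end
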